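(* Let $S$ be a monoid, $A_S$ a right $S$-act, and $A_1\subseteq A_2\subseteq\cdots\subseteq A_n=A$ subacts. Then $A_S$ is artinian (resp. noetherian, Rees artinian, Rees noetherian) if and only if $A_1$ and all Rees factor acts $A_{i+1}/A_i$, $1\le i\le n-1$, are artinian (resp. noetherian, Rees artinian, Rees noetherian).
   Context: For a subact $B\subseteq A$, the Rees factor act $A/B$ is the quotient of $A$ by the Rees congruence $(B\times B)\cup\Delta_A$. A right $S$-act is artinian (noetherian) if its lattice of congruences satisfies the descending (ascending) chain condition; Rees artinian (Rees noetherian) if its subacts satisfy the descending (ascending) chain condition. *)

theory Defs
  imports Main
begin

definition right_act :: "'a set \<Rightarrow> ('a \<Rightarrow> 's::monoid_mult \<Rightarrow> 'a) \<Rightarrow> bool" where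
  "right_act A act \<longleftrightarrow>
     (\<forall>a\<in>A. \<forall>s. act a s \<in> A) \<and>
     (\<forall>a\<in>A. act a 1 = a) \<and>
     (\<forall>a\<in>A. \<forall>s t. act a (s * t) = act (act a s) t)"

definition subact :: "'a set \<Rightarrow> 'a set \<Rightarrow> ('a \<Rightarrow> 's::monoid_mult \<Rightarrow> 'a) \<Rightarrow> bool" where
  "subact B A act \<longleftrightarrow> B \<subseteq> A \<and> (\<forall>b\<in>B. \<forall>s. act b s \<in> B)"

definition act_congruence :: "'a set \<Rightarrow> ('a \<Rightarrow> 's::monoid_mult \<Rightarrow> 'a) \<Rightarrow> 'a rel \<Rightarrow> bool" where
  "act_congruence A act \<rho> \<longleftrightarrow>
     equiv A \<rho> \<and> (\<forall>a b s. (a, b) \<in> \<rho> \<longrightarrow> (act a s, act b s) \<in> \<rho>)"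

definition act_artinian :: "'a set \<Rightarrow> ('a \<Rightarrow> 's::monoid_mult \<Rightarrow> 'a) \<Rightarrow> bool" where
  "act_artinian A act \<longleftrightarrow>
     (\<forall>f :: nat \<Rightarrow> 'a rel. (\<forall>n. act_congruence A act (f n)) \<and> (\<forall>n. f (Suc n) \<subseteq> f n)
        \<longrightarrow> (\<exists>N. \<forall>n\<ge>N. f n = f N))"

definition act_noetherian :: "'a set \<Rightarrow> ('a \<Rightarrow> 's::monoid_mult \<Rightarrow> 'a) \<Rightarrow> bool" where
  "act_noetherian A act \<longleftrightarrow>
     (\<forall>f :: nat \<Rightarrow> 'a rel. (\<forall>n. act_congruence A act (f n)) \<and> (\<forall>n. f n \<subseteq> f (Suc n))
        \<longrightarrow> (\<exists>N. \<forall>n\<ge>N. f n = f N))"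

definition act_rees_artinian :: "'a set \<Rightarrow> ('a \<Rightarrow> 's::monoid_mult \<Rightarrow> 'a) \<Rightarrow> bool" where
  "act_rees_artinian A act \<longleftrightarrow>
     (\<forall>f :: nat \<Rightarrow> 'a set. (\<forall>n. subact (f n) A act) \<and> (\<forall>n. f (Suc n) \<subseteq> f n)
        \<longrightarrow> (\<exists>N. \<forall>n\<ge>N. f n = f N))"

definition act_rees_noetherian :: "'a set \<Rightarrow> ('a \<Rightarrow> 's::monoid_mult \<Rightarrow> 'a) \<Rightarrow> bool" where
  "act_rees_noetherian A act \<longleftrightarrow>
     (\<forall>f :: nat \<Rightarrow> 'a set. (\<forall>n. subact (f n) A act) \<and> (\<forall>n. f n \<subseteq> f (Suc n))
        \<longrightarrow> (\<exists>N. \<forall>n\<ge>N. f n = f N))"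

definition rees_cong :: "'a set \<Rightarrow> 'a set \<Rightarrow> 'a rel" where
  "rees_cong A B = (B \<times> B) \<union> Id_on A"

definition quot_act :: "'a rel \<Rightarrow> ('a \<Rightarrow> 's \<Rightarrow> 'a) \<Rightarrow> 'a set \<Rightarrow> 's \<Rightarrow> 'a set" where
  "quot_act \<rho> act X s = \<rho> `` ((\<lambda>x. act x s) ` X)"

definition rees_factor_carrier :: "'a set \<Rightarrow> 'a set \<Rightarrow> 'a set set" where
  "rees_factor_carrier A B = A // rees_cong A B"

definition rees_factor_act :: "'a set \<Rightarrow> 'a set \<Rightarrow> ('a \<Rightarrow> 's \<Rightarrow> 'a) \<Rightarrow> 'a set \<Rightarrow> 's \<Rightarrow> 'a set" where
  "rees_factor_act A B act = quot_act (rees_cong A B) act"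

end

theory Submission
  imports Defs
begin

(* For a subact B of A, extending by the identity and pulling back along A \<rightarrow> A/B embed the
  congruence lattices of B and of A/B into that of A, while restricting to B and passing to A/B
  (after joining with the Rees congruence) are monotone maps out of it that separate comparable
  congruences.  Order embeddings transfer ACC and DCC downwards, two such separating maps
  transfer them upwards, and the same holds for the lattices of subacts.  Hence A has each of the
  four chain conditions iff B and A/B have it, and induction along the series gives the theorem. *)

section \<open>Chain conditions on families of sets\<close>

definition chain_condition :: "('x \<Rightarrow> 'x \<Rightarrow> bool) \<Rightarrow> 'x set \<Rightarrow> bool" where
  "chain_condition R L \<longleftrightarrow>
     (\<forall>f. range f \<subseteq> L \<and> (\<forall>n. R (f n) (f (Suc n))) \<longrightarrow> (\<exists>N. \<forall>n\<ge>N. f n = f N))"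

abbreviation dcc :: "'x set set \<Rightarrow> bool" where
  "dcc \<equiv> chain_condition (\<supseteq>)"

abbreviation acc :: "'x set set \<Rightarrow> bool" where
  "acc \<equiv> chain_condition (\<subseteq>)"

lemma chain_condition_embedding:
  assumes "e ` L1 \<subseteq> L2"
    and "\<And>x y. x \<in> L1 \<Longrightarrow> y \<in> L1 \<Longrightarrow> R1 x y \<Longrightarrow> R2 (e x) (e y)"
    and "inj_on e L1" and "chain_condition R2 L2"
  shows "chain_condition R1 L1"
  unfolding chain_condition_def
proof (intro allI impI)
  fix f assume f: "range f \<subseteq> L1 \<and> (\<forall>n. R1 (f n) (f (Suc n)))"
  with assms(1,2) have "range (e \<circ> f) \<subseteq> L2 \<and> (\<forall>n. R2 ((e \<circ> f) n) ((e \<circ> f) (Suc n)))"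
    by (auto simp: image_subset_iff)
  then obtain N where "\<forall>n\<ge>N. e (f n) = e (f N)"
    using assms(4) unfolding chain_condition_def by fastforce
  then show "\<exists>N. \<forall>n\<ge>N. f n = f N"
    using assms(3) f by (metis inj_onD range_subsetD)
qed

lemma chain_condition_extension:
  assumes "transp R"
    and "r ` L \<subseteq> L1" and "\<And>x y. x \<in> L \<Longrightarrow> y \<in> L \<Longrightarrow> R x y \<Longrightarrow> R1 (r x) (r y)"
    and "p ` L \<subseteq> L2" and "\<And>x y. x \<in> L \<Longrightarrow> y \<in> L \<Longrightarrow> R x y \<Longrightarrow> R2 (p x) (p y)"
    and separate: "\<And>x y. x \<in> L \<Longrightarrow> y \<in> L \<Longrightarrow> R x y \<Longrightarrow> r x = r y \<Longrightarrow> p x = p y \<Longrightarrow> x = y"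
    and "chain_condition R1 L1" and "chain_condition R2 L2"
  shows "chain_condition R L"
  unfolding chain_condition_def
proof (intro allI impI)
  fix f assume "range f \<subseteq> L \<and> (\<forall>n. R (f n) (f (Suc n)))"
  then have f_in: "f n \<in> L" and f_chain: "\<forall>n. R (f n) (f (Suc n))" for n by auto
  have "range (r \<circ> f) \<subseteq> L1 \<and> (\<forall>n. R1 ((r \<circ> f) n) ((r \<circ> f) (Suc n)))"
    using f_in f_chain assms(2,3) by (auto simp: image_subset_iff)
  then obtain N1 where N1: "\<forall>n\<ge>N1. r (f n) = r (f N1)"
    using assms(7) unfolding chain_condition_def by fastforce
  have "range (p \<circ> f) \<subseteq> L2 \<and> (\<forall>n. R2 ((p \<circ> f) n) ((p \<circ> f) (Suc n)))"
    using f_in f_chain assms(4,5) by (auto simp: image_subset_iff)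
  then obtain N2 where N2: "\<forall>n\<ge>N2. p (f n) = p (f N2)"
    using assms(8) unfolding chain_condition_def by fastforce
  define N where "N = max N1 N2"
  have "f N = f n" if "N < n" for n
  proof (rule separate)
    show "f N \<in> L" "f n \<in> L" by (fact f_in)+
    show "R (f N) (f n)" using \<open>N < n\<close>
      by (induction N n rule: less_Suc_induct) (simp add: f_chain, blast intro: transpD[OF assms(1)])
    have "N1 \<le> N" "N2 \<le> N" "N \<le> n" using \<open>N < n\<close> unfolding N_def by auto
    then show "r (f N) = r (f n)" "p (f N) = p (f n)"
      using N1[rule_format, of N] N1[rule_format, of n] N2[rule_format, of N] N2[rule_format, of n]
      by simp_all
  qed
  then show "\<exists>N. \<forall>n\<ge>N. f n = f N"
    by (metis le_neq_implies_less)
qed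

lemma chain_condition_iff_extension:
  assumes "transp R"
    and "e ` L1 \<subseteq> L" and "\<And>x y. x \<in> L1 \<Longrightarrow> y \<in> L1 \<Longrightarrow> R1 x y \<Longrightarrow> R (e x) (e y)"
    and "inj_on e L1"
    and "e' ` L2 \<subseteq> L" and "\<And>x y. x \<in> L2 \<Longrightarrow> y \<in> L2 \<Longrightarrow> R2 x y \<Longrightarrow> R (e' x) (e' y)"
    and "inj_on e' L2"
    and "r ` L \<subseteq> L1" and "\<And>x y. x \<in> L \<Longrightarrow> y \<in> L \<Longrightarrow> R x y \<Longrightarrow> R1 (r x) (r y)"
    and "p ` L \<subseteq> L2" and "\<And>x y. x \<in> L \<Longrightarrow> y \<in> L \<Longrightarrow> R x y \<Longrightarrow> R2 (p x) (p y)"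
    and "\<And>x y. x \<in> L \<Longrightarrow> y \<in> L \<Longrightarrow> R x y \<Longrightarrow> r x = r y \<Longrightarrow> p x = p y \<Longrightarrow> x = y"
  shows "chain_condition R L \<longleftrightarrow> chain_condition R1 L1 \<and> chain_condition R2 L2"
  using chain_condition_embedding[of e L1 L R1 R] chain_condition_embedding[of e' L2 L R2 R]
    chain_condition_extension[of R r L L1 R1 p L2 R2] assms
  by blast

lemma dcc_acc_extension:
  assumes "e ` L1 \<subseteq> L" and "mono e" and "inj_on e L1"
    and "e' ` L2 \<subseteq> L" and "mono e'" and "inj_on e' L2"
    and "r ` L \<subseteq> L1" and "mono r"
    and "p ` L \<subseteq> L2" and "mono p"
    and "\<And>x y. x \<in> L \<Longrightarrow> y \<in> L \<Longrightarrow> x \<subseteq> y \<Longrightarrow> r x = r y \<Longrightarrow> p x = p y \<Longrightarrow> x = y"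
  shows "(dcc L \<longleftrightarrow> dcc L1 \<and> dcc L2) \<and> (acc L \<longleftrightarrow> acc L1 \<and> acc L2)"
proof
  show "dcc L \<longleftrightarrow> dcc L1 \<and> dcc L2"
  proof (rule chain_condition_iff_extension[OF _ assms(1) _ assms(3,4) _ assms(6,7) _ assms(9)])
    show "transp (\<supseteq>)" by (rule transp_on_ge)
    show "x = y" if "x \<in> L" "y \<in> L" "x \<supseteq> y" "r x = r y" "p x = p y" for x y
      using assms(11)[of y x] that by simp
  qed (simp_all add: monoD[OF assms(2)] monoD[OF assms(5)] monoD[OF assms(8)]
      monoD[OF assms(10)])
  show "acc L \<longleftrightarrow> acc L1 \<and> acc L2"
  proof (rule chain_condition_iff_extension[OF _ assms(1) _ assms(3,4) _ assms(6,7) _ assms(9)])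
    show "transp (\<subseteq>)" by (rule transp_on_le)
    show "x = y" if "x \<in> L" "y \<in> L" "x \<subseteq> y" "r x = r y" "p x = p y" for x y
      using that by (rule assms(11))
  qed (simp_all add: monoD[OF assms(2)] monoD[OF assms(5)] monoD[OF assms(8)]
      monoD[OF assms(10)])
qed

section \<open>Rees factor acts\<close>

definition act_congruences :: "'a set \<Rightarrow> ('a \<Rightarrow> 's::monoid_mult \<Rightarrow> 'a) \<Rightarrow> 'a rel set" where
  "act_congruences A act = {r. act_congruence A act r}"

definition subacts :: "'a set \<Rightarrow> ('a \<Rightarrow> 's::monoid_mult \<Rightarrow> 'a) \<Rightarrow> 'a set set" where
  "subacts A act = {C. subact C A act}"

lemma act_artinian_iff_dcc: "act_artinian A act \<longleftrightarrow> dcc (act_congruences A act)"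
  unfolding act_artinian_def act_congruences_def chain_condition_def by (simp add: image_subset_iff)

lemma act_noetherian_iff_acc: "act_noetherian A act \<longleftrightarrow> acc (act_congruences A act)"
  unfolding act_noetherian_def act_congruences_def chain_condition_def by (simp add: image_subset_iff)

lemma act_rees_artinian_iff_dcc: "act_rees_artinian A act \<longleftrightarrow> dcc (subacts A act)"
  unfolding act_rees_artinian_def subacts_def chain_condition_def by (simp add: image_subset_iff)

lemma act_rees_noetherian_iff_acc: "act_rees_noetherian A act \<longleftrightarrow> acc (subacts A act)"
  unfolding act_rees_noetherian_def subacts_def chain_condition_def by (simp add: image_subset_iff)

lemma act_congruenceI:
  assumes "r \<subseteq> A \<times> A" and "refl_on A r" and "sym r" and "trans r"
    and "\<And>a b s. (a, b) \<in> r \<Longrightarrow> (act a s, act b s) \<in> r"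
  shows "act_congruence A act r"
  using assms unfolding act_congruence_def equiv_def by blast

lemma act_congruenceD:
  assumes "act_congruence A act r"
  shows "r \<subseteq> A \<times> A" and "refl_on A r" and "sym r" and "trans r"
    and "(a, b) \<in> r \<Longrightarrow> (act a s, act b s) \<in> r"
  using assms unfolding act_congruence_def equiv_def by auto

lemma right_act_subact: "right_act A act \<Longrightarrow> subact B A act \<Longrightarrow> right_act B act"
  unfolding right_act_def subact_def by (simp add: subset_iff)

locale act_with_subact =
  fixes A B :: "'a set" and act :: "'a \<Rightarrow> 's::monoid_mult \<Rightarrow> 'a"
  assumes right_act: "right_act A act" and subact: "subact B A act"
begin

definition rees_class :: "'a \<Rightarrow> 'a set" where
  "rees_class a = rees_cong A B `` {a}"

abbreviation factor :: "'a set set" where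
  "factor \<equiv> rees_factor_carrier A B"

abbreviation factor_act :: "'a set \<Rightarrow> 's \<Rightarrow> 'a set" where
  "factor_act \<equiv> rees_factor_act A B act"

lemma subset_carrier: "B \<subseteq> A"
  using subact by (simp add: subact_def)

lemma act_closed: "a \<in> A \<Longrightarrow> act a s \<in> A"
  using right_act by (simp add: right_act_def)

lemma subact_closed: "b \<in> B \<Longrightarrow> act b s \<in> B"
  using subact by (simp add: subact_def)

lemma equiv_rees_cong: "equiv A (rees_cong A B)"
  using subset_carrier unfolding rees_cong_def by (intro equivI refl_onI symI transI) auto

lemma rees_class_if: "a \<in> A \<Longrightarrow> rees_class a = (if a \<in> B then B else {a})"
  using subset_carrier unfolding rees_class_def rees_cong_def by auto

lemma rees_class_self: "a \<in> A \<Longrightarrow> a \<in> rees_class a"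
  by (simp add: rees_class_if)

lemma rees_class_eq_iff:
  "a \<in> A \<Longrightarrow> b \<in> A \<Longrightarrow> rees_class a = rees_class b \<longleftrightarrow> (a, b) \<in> rees_cong A B"
  unfolding rees_class_def by (rule eq_equiv_class_iff[OF equiv_rees_cong])

lemma factor_eq: "factor = rees_class ` A"
  unfolding rees_factor_carrier_def quotient_def rees_class_def by blast

lemma factor_act_rees_class:
  assumes "a \<in> A"
  shows "factor_act (rees_class a) s = rees_class (act a s)"
proof -
  have "factor_act (rees_class a) s = rees_cong A B `` ((\<lambda>x. act x s) ` rees_class a)"
    unfolding rees_factor_act_def quot_act_def ..
  also have "\<dots> = rees_class (act a s)"
  proof (cases "a \<in> B")
    case True
    then have "(\<lambda>x. act x s) ` rees_class a \<subseteq> B" and "act a s \<in> (\<lambda>x. act x s) ` rees_class a"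
      using assms subact_closed by (auto simp: rees_class_if)
    then have "rees_cong A B `` ((\<lambda>x. act x s) ` rees_class a) = B"
      using subset_carrier unfolding rees_cong_def by auto
    also have "B = rees_class (act a s)"
      using True assms subact_closed by (simp add: rees_class_if act_closed)
    finally show ?thesis .
  next
    case False
    then have "rees_class a = {a}"
      using assms by (simp add: rees_class_if)
    then show ?thesis
      by (simp add: rees_class_def)
  qed
  finally show ?thesis .
qed

subsection \<open>Congruences\<close>

definition cong_pullback :: "'a set rel \<Rightarrow> 'a rel" where
  "cong_pullback t = {(a, b) \<in> A \<times> A. (rees_class a, rees_class b) \<in> t}"

definition rees_join :: "'a rel \<Rightarrow> 'a rel" where
  "rees_join r = r \<union> r O (B \<times> B) O r"

definition cong_quotient :: "'a rel \<Rightarrow> 'a set rel" where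
  "cong_quotient r = map_prod rees_class rees_class ` r"

lemma act_congruence_restrict:
  assumes "act_congruence A act r"
  shows "act_congruence B act (Restr r B)"
proof (rule act_congruenceI)
  note r = act_congruenceD[OF assms]
  show "refl_on B (Restr r B)"
    by (rule refl_onI) (use r(2) subset_carrier in \<open>blast dest: refl_onD\<close>)
  show "sym (Restr r B)"
    by (rule sym_Int[OF r(3)]) (rule symI, blast)
  show "trans (Restr r B)"
    by (rule trans_Int[OF r(4)]) (rule transI, blast)
  show "(act a s, act b s) \<in> Restr r B" if "(a, b) \<in> Restr r B" for a b s
    using that r(5) subact_closed by blast
qed blast

lemma act_congruence_extend:
  assumes "act_congruence B act r"
  shows "act_congruence A act (r \<union> Id_on A)"
proof (rule act_congruenceI)
  note r = act_congruenceD[OF assms]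
  show "r \<union> Id_on A \<subseteq> A \<times> A"
    using r(1) subset_carrier by blast
  show "refl_on A (r \<union> Id_on A)"
    by (rule refl_onI) blast
  show "sym (r \<union> Id_on A)"
    by (rule sym_Un[OF r(3) sym_Id_on])
  show "trans (r \<union> Id_on A)"
    by (rule transI) (blast intro: transD[OF r(4)])
  show "(act a s, act b s) \<in> r \<union> Id_on A" if "(a, b) \<in> r \<union> Id_on A" for a b s
    using that r(5) act_closed by blast
qed

lemma inj_on_extend: "inj_on (\<lambda>r. r \<union> Id_on A) (act_congruences B act)"
proof (rule inj_on_inverseI[where g = "\<lambda>r. Restr r B"])
  fix r assume "r \<in> act_congruences B act"
  then have "r \<subseteq> B \<times> B" "refl_on B r"
    unfolding act_congruences_def by (blast dest: act_congruenceD)+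
  then show "Restr (r \<union> Id_on A) B = r"
    using subset_carrier by (blast dest: refl_onD)
qed

lemma act_congruence_pullback:
  assumes "act_congruence factor factor_act t"
  shows "act_congruence A act (cong_pullback t)"
proof (rule act_congruenceI)
  note t = act_congruenceD[OF assms]
  show "cong_pullback t \<subseteq> A \<times> A"
    unfolding cong_pullback_def by blast
  show "refl_on A (cong_pullback t)"
  proof (rule refl_onI)
    fix a assume "a \<in> A"
    then have "rees_class a \<in> factor" unfolding factor_eq by (rule imageI)
    with \<open>a \<in> A\<close> show "(a, a) \<in> cong_pullback t"
      unfolding cong_pullback_def using refl_onD[OF t(2)] by blast
  qed
  show "sym (cong_pullback t)"
    unfolding cong_pullback_def by (rule symI) (blast intro: symD[OF t(3)])
  show "trans (cong_pullback t)"
    unfolding cong_pullback_def by (rule transI) (blast intro: transD[OF t(4)])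
  show "(act a s, act b s) \<in> cong_pullback t" if "(a, b) \<in> cong_pullback t" for a b s
    using that t(5)[of "rees_class a" "rees_class b" s]
    by (auto simp: cong_pullback_def factor_act_rees_class act_closed)
qed

lemma inj_on_cong_pullback: "inj_on cong_pullback (act_congruences factor factor_act)"
proof (rule inj_on_inverseI[where g = "\<lambda>r. map_prod rees_class rees_class ` r"])
  fix t assume "t \<in> act_congruences factor factor_act"
  then have "t \<subseteq> rees_class ` A \<times> rees_class ` A"
    unfolding act_congruences_def factor_eq by (rule CollectE) (rule act_congruenceD)
  then show "map_prod rees_class rees_class ` cong_pullback t = t"
    unfolding cong_pullback_def by (auto simp: image_iff)
qed

lemma act_congruence_rees_join:
  assumes "act_congruence A act r"
  shows "act_congruence A act (rees_join r)" and "rees_cong A B \<subseteq> rees_join r"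
proof -
  note r = act_congruenceD[OF assms]
  show "act_congruence A act (rees_join r)"
  proof (rule act_congruenceI)
    show "rees_join r \<subseteq> A \<times> A"
      using r(1) unfolding rees_join_def by blast
    show "refl_on A (rees_join r)"
      using r(2) unfolding rees_join_def refl_on_def by blast
    show "sym (rees_join r)"
    proof (rule symI)
      fix x y assume "(x, y) \<in> rees_join r"
      then show "(y, x) \<in> rees_join r"
        unfolding rees_join_def by (elim UnE relcompE) (blast intro: symD[OF r(3)])+
    qed
    show "trans (rees_join r)"
    proof (rule transI)
      fix x y z assume "(x, y) \<in> rees_join r" "(y, z) \<in> rees_join r"
      then show "(x, z) \<in> rees_join r"
        unfolding rees_join_def by (elim UnE relcompE) (blast intro: transD[OF r(4)])+
    qed
    show "(act a s, act b s) \<in> rees_join r" if "(a, b) \<in> rees_join r" for a b s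
      using that unfolding rees_join_def
      by (elim UnE relcompE) (blast intro: r(5) subact_closed)+
  qed
  show "rees_cong A B \<subseteq> rees_join r"
    using r(2) subset_carrier unfolding rees_cong_def rees_join_def refl_on_def by blast
qed

lemma mem_cong_quotientI: "(a, b) \<in> r \<Longrightarrow> (rees_class a, rees_class b) \<in> cong_quotient r"
  unfolding cong_quotient_def by (rule image_eqI[where x = "(a, b)"]) simp_all

lemma mem_cong_quotientE:
  assumes "(X, Y) \<in> cong_quotient r"
  obtains a b where "(a, b) \<in> r" "X = rees_class a" "Y = rees_class b"
  using assms unfolding cong_quotient_def by auto

lemma mem_cong_quotient_iff:
  assumes "act_congruence A act r" and "rees_cong A B \<subseteq> r" and "a \<in> A" and "b \<in> A"
  shows "(rees_class a, rees_class b) \<in> cong_quotient r \<longleftrightarrow> (a, b) \<in> r"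
proof
  assume "(rees_class a, rees_class b) \<in> cong_quotient r"
  then obtain a' b' where "(a', b') \<in> r" and "rees_class a = rees_class a'"
    and "rees_class b = rees_class b'"
    by (rule mem_cong_quotientE)
  moreover note r = act_congruenceD[OF assms(1)]
  ultimately have "(a, a') \<in> r" "(b', b) \<in> r"
    using assms(2-4) rees_class_eq_iff symD[OF r(3)] by blast+
  with \<open>(a', b') \<in> r\<close> show "(a, b) \<in> r"
    using transD[OF r(4)] by blast
qed (rule mem_cong_quotientI)

lemma act_congruence_quotient:
  assumes "act_congruence A act r" and "rees_cong A B \<subseteq> r"
  shows "act_congruence factor factor_act (cong_quotient r)"
proof (rule act_congruenceI)
  note r = act_congruenceD[OF assms(1)]
  show "cong_quotient r \<subseteq> factor \<times> factor"
    using r(1) unfolding factor_eq cong_quotient_def by auto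
  show "refl_on factor (cong_quotient r)"
  proof (rule refl_onI)
    fix X assume "X \<in> factor"
    then obtain a where "a \<in> A" and X: "X = rees_class a"
      unfolding factor_eq by blast
    then show "(X, X) \<in> cong_quotient r"
      unfolding X by (intro mem_cong_quotientI refl_onD[OF r(2)])
  qed
  show "sym (cong_quotient r)"
  proof (rule symI)
    fix X Y assume "(X, Y) \<in> cong_quotient r"
    then obtain a b where ab: "(a, b) \<in> r" and X: "X = rees_class a" and Y: "Y = rees_class b"
      by (rule mem_cong_quotientE)
    from ab show "(Y, X) \<in> cong_quotient r"
      unfolding X Y by (rule mem_cong_quotientI[OF symD[OF r(3)]])
  qed
  show "trans (cong_quotient r)"
  proof (rule transI)
    fix X Y Z assume "(X, Y) \<in> cong_quotient r" "(Y, Z) \<in> cong_quotient r"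
    then obtain a b b' c where ab: "(a, b) \<in> r" and X: "X = rees_class a" and Y: "Y = rees_class b"
      and bc: "(b', c) \<in> r" and Y': "Y = rees_class b'" and Z: "Z = rees_class c"
      by (elim mem_cong_quotientE)
    have "b \<in> A" "b' \<in> A" using ab bc r(1) by auto
    with Y Y' have "(b, b') \<in> r"
      using assms(2) rees_class_eq_iff by blast
    with ab bc have "(a, c) \<in> r"
      using transD[OF r(4)] by blast
    then show "(X, Z) \<in> cong_quotient r"
      unfolding X Z by (rule mem_cong_quotientI)
  qed
  show "(factor_act X s, factor_act Y s) \<in> cong_quotient r" if "(X, Y) \<in> cong_quotient r" for X Y s
  proof -
    from that obtain a b where ab: "(a, b) \<in> r" and X: "X = rees_class a" and Y: "Y = rees_class b"
      by (rule mem_cong_quotientE)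
    from ab have "a \<in> A" "b \<in> A" using r(1) by auto
    moreover from ab have "(rees_class (act a s), rees_class (act b s)) \<in> cong_quotient r"
      by (intro mem_cong_quotientI r(5))
    ultimately show ?thesis
      unfolding X Y by (simp only: factor_act_rees_class)
  qed
qed

lemma act_congruence_eqI:
  assumes x: "act_congruence A act x" and y: "act_congruence A act y" and "x \<subseteq> y"
    and restrict_eq: "Restr x B = Restr y B"
    and quotient_eq: "cong_quotient (rees_join x) = cong_quotient (rees_join y)"
  shows "x = y"
proof (rule equalityI)
  note join_x = act_congruence_rees_join[OF x] and join_y = act_congruence_rees_join[OF y]
  have "rees_join y \<subseteq> rees_join x"
  proof (rule subrelI)
    fix a b assume ab: "(a, b) \<in> rees_join y"
    then have "a \<in> A" "b \<in> A"
      using act_congruenceD(1)[OF join_y(1)] by auto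
    moreover have "(rees_class a, rees_class b) \<in> cong_quotient (rees_join x)"
      unfolding quotient_eq using ab by (rule mem_cong_quotientI)
    ultimately show "(a, b) \<in> rees_join x"
      using mem_cong_quotient_iff[OF join_x] by blast
  qed
  have "sym y" "trans y" "trans x"
    using act_congruenceD[OF x] act_congruenceD[OF y] by simp_all
  show "y \<subseteq> x"
  proof (rule subrelI)
    fix a b assume "(a, b) \<in> y"
    moreover have "y \<subseteq> rees_join y" unfolding rees_join_def by (rule Un_upper1)
    ultimately have "(a, b) \<in> rees_join x"
      using \<open>rees_join y \<subseteq> rees_join x\<close> by blast
    then consider "(a, b) \<in> x" | c d where "(a, c) \<in> x" "c \<in> B" "d \<in> B" "(d, b) \<in> x"
      unfolding rees_join_def by blast
    then show "(a, b) \<in> x"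
    proof cases
      case 2
      have "(c, a) \<in> y" "(b, d) \<in> y"
        using 2(1,4) \<open>x \<subseteq> y\<close> by (blast intro: symD[OF \<open>sym y\<close>])+
      then have "(c, d) \<in> y"
        using \<open>(a, b) \<in> y\<close> by (blast intro: transD[OF \<open>trans y\<close>])
      with 2(2,3) restrict_eq have "(c, d) \<in> x" by blast
      with 2(1,4) show ?thesis by (blast intro: transD[OF \<open>trans x\<close>])
    qed
  qed
qed (fact \<open>x \<subseteq> y\<close>)

theorem congruence_chain_conditions:
  "(dcc (act_congruences A act) \<longleftrightarrow>
      dcc (act_congruences B act) \<and> dcc (act_congruences factor factor_act)) \<and>
   (acc (act_congruences A act) \<longleftrightarrow>
      acc (act_congruences B act) \<and> acc (act_congruences factor factor_act))"
proof (rule dcc_acc_extension[where e = "\<lambda>r. r \<union> Id_on A" and e' = cong_pullback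
      and r = "\<lambda>r. Restr r B" and p = "cong_quotient \<circ> rees_join"])
  show "(\<lambda>r. r \<union> Id_on A) ` act_congruences B act \<subseteq> act_congruences A act"
    using act_congruence_extend by (auto simp: act_congruences_def)
  show "cong_pullback ` act_congruences factor factor_act \<subseteq> act_congruences A act"
    using act_congruence_pullback by (auto simp: act_congruences_def)
  show "(\<lambda>r. Restr r B) ` act_congruences A act \<subseteq> act_congruences B act"
    using act_congruence_restrict by (auto simp: act_congruences_def)
  show "(cong_quotient \<circ> rees_join) ` act_congruences A act \<subseteq> act_congruences factor factor_act"
    using act_congruence_quotient act_congruence_rees_join by (auto simp: act_congruences_def)
  show "x = y" if "x \<in> act_congruences A act" "y \<in> act_congruences A act" "x \<subseteq> y"
    "Restr x B = Restr y B" "(cong_quotient \<circ> rees_join) x = (cong_quotient \<circ> rees_join) y"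
    for x y
    by (rule act_congruence_eqI) (use that in \<open>simp_all add: act_congruences_def\<close>)
  show "mono (\<lambda>r. r \<union> Id_on A)" "mono (\<lambda>r. Restr r B)"
    by (auto intro: monoI)
  show "mono cong_pullback"
    unfolding cong_pullback_def by (rule monoI) blast
  show "mono (cong_quotient \<circ> rees_join)"
    by (rule monoI) (simp only: comp_def cong_quotient_def rees_join_def, rule image_mono, blast)
qed (fact inj_on_extend inj_on_cong_pullback)+

lemma artinian_iff:
  "act_artinian A act \<longleftrightarrow> act_artinian B act \<and> act_artinian factor factor_act"
  using congruence_chain_conditions by (simp add: act_artinian_iff_dcc)

lemma noetherian_iff:
  "act_noetherian A act \<longleftrightarrow> act_noetherian B act \<and> act_noetherian factor factor_act"
  using congruence_chain_conditions by (simp add: act_noetherian_iff_acc)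

subsection \<open>Subacts\<close>

lemma subact_restrict: "subact D A act \<Longrightarrow> subact (D \<inter> B) B act"
  using subact_closed unfolding subact_def by blast

lemma subact_extend: "subact C B act \<Longrightarrow> subact C A act"
  using subset_carrier unfolding subact_def by blast

lemma subact_pullback:
  assumes "subact X factor factor_act"
  shows "subact {a \<in> A. rees_class a \<in> X} A act"
  using assms act_closed unfolding subact_def by (auto simp flip: factor_act_rees_class)

lemma inj_on_subact_pullback: "inj_on (\<lambda>X. {a \<in> A. rees_class a \<in> X}) (subacts factor factor_act)"
proof (rule inj_on_inverseI[where g = "\<lambda>X. rees_class ` X"])
  fix X assume "X \<in> subacts factor factor_act"
  then have "X \<subseteq> rees_class ` A"
    unfolding subacts_def subact_def factor_eq by simp
  then show "rees_class ` {a \<in> A. rees_class a \<in> X} = X"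
    by auto
qed

lemma subact_quotient:
  assumes "subact D A act"
  shows "subact (rees_class ` (D \<union> B)) factor factor_act"
  unfolding subact_def
proof (intro conjI ballI allI)
  have "D \<union> B \<subseteq> A" using assms subset_carrier unfolding subact_def by blast
  then show "rees_class ` (D \<union> B) \<subseteq> factor"
    unfolding factor_eq by (rule image_mono)
  fix X s assume "X \<in> rees_class ` (D \<union> B)"
  then obtain a where a: "a \<in> D \<union> B" and X: "X = rees_class a" by blast
  have "act a s \<in> D \<union> B"
    using a assms subact_closed unfolding subact_def by blast
  moreover have "a \<in> A"
    using a \<open>D \<union> B \<subseteq> A\<close> by blast
  ultimately show "factor_act X s \<in> rees_class ` (D \<union> B)"
    unfolding X by (simp add: factor_act_rees_class)
qed

lemma subact_eqI:
  assumes "subact D A act" and "subact D' A act" and "D \<subseteq> D'" and restrict_eq: "D \<inter> B = D' \<inter> B"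
    and quotient_eq: "rees_class ` (D \<union> B) = rees_class ` (D' \<union> B)"
  shows "D = D'"
proof (rule equalityI)
  have "D \<union> B \<subseteq> A" using assms(1) subset_carrier unfolding subact_def by blast
  show "D' \<subseteq> D"
  proof
    fix d assume "d \<in> D'"
    show "d \<in> D"
    proof (cases "d \<in> B")
      case True
      then show ?thesis using \<open>d \<in> D'\<close> restrict_eq by blast
    next
      case False
      have "d \<in> A" using \<open>d \<in> D'\<close> assms(2) unfolding subact_def by blast
      have "rees_class d \<in> rees_class ` (D \<union> B)"
        using \<open>d \<in> D'\<close> unfolding quotient_eq by blast
      then obtain a where a: "a \<in> D \<union> B" and "rees_class d = rees_class a" by blast
      then have "a \<in> rees_class d"
        using \<open>D \<union> B \<subseteq> A\<close> rees_class_self by blast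
      then have "a = d"
        using \<open>d \<in> A\<close> False by (simp add: rees_class_if)
      then show ?thesis using a False by blast
    qed
  qed
qed (fact \<open>D \<subseteq> D'\<close>)

theorem subact_chain_conditions:
  "(dcc (subacts A act) \<longleftrightarrow> dcc (subacts B act) \<and> dcc (subacts factor factor_act)) \<and>
   (acc (subacts A act) \<longleftrightarrow> acc (subacts B act) \<and> acc (subacts factor factor_act))"
proof (rule dcc_acc_extension[where e = "\<lambda>C. C" and e' = "\<lambda>X. {a \<in> A. rees_class a \<in> X}"
      and r = "\<lambda>D. D \<inter> B" and p = "\<lambda>D. rees_class ` (D \<union> B)"])
  show "(\<lambda>C. C) ` subacts B act \<subseteq> subacts A act"
    using subact_extend by (auto simp: subacts_def)
  show "(\<lambda>X. {a \<in> A. rees_class a \<in> X}) ` subacts factor factor_act \<subseteq> subacts A act"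
    using subact_pullback by (auto simp: subacts_def)
  show "(\<lambda>D. D \<inter> B) ` subacts A act \<subseteq> subacts B act"
    using subact_restrict by (auto simp: subacts_def)
  show "(\<lambda>D. rees_class ` (D \<union> B)) ` subacts A act \<subseteq> subacts factor factor_act"
    using subact_quotient by (auto simp: subacts_def)
  show "x = y" if "x \<in> subacts A act" "y \<in> subacts A act" "x \<subseteq> y"
    "x \<inter> B = y \<inter> B" "rees_class ` (x \<union> B) = rees_class ` (y \<union> B)" for x y
    by (rule subact_eqI) (use that in \<open>simp_all add: subacts_def\<close>)
  show "mono (\<lambda>C. C)" "mono (\<lambda>D. D \<inter> B)" "mono (\<lambda>X. {a \<in> A. rees_class a \<in> X})"
    "mono (\<lambda>D. rees_class ` (D \<union> B))"
    by (auto intro: monoI)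
qed (fact inj_on_subact_pullback inj_on_id2)+

lemma rees_artinian_iff:
  "act_rees_artinian A act \<longleftrightarrow> act_rees_artinian B act \<and> act_rees_artinian factor factor_act"
  using subact_chain_conditions by (simp add: act_rees_artinian_iff_dcc)

lemma rees_noetherian_iff:
  "act_rees_noetherian A act \<longleftrightarrow> act_rees_noetherian B act \<and> act_rees_noetherian factor factor_act"
  using subact_chain_conditions by (simp add: act_rees_noetherian_iff_acc)

end

lemma iff_along_subact_series:
  fixes act :: "'a \<Rightarrow> 's::monoid_mult \<Rightarrow> 'a"
  assumes step: "\<And>C B. act_with_subact C B act \<Longrightarrow> P C \<longleftrightarrow> P B \<and> Q C B"
    and "right_act A act" and "n \<ge> 1"
    and members: "\<forall>i\<in>{1..n}. subact (As i) A act"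
    and chain: "\<forall>i\<in>{1..<n}. As i \<subseteq> As (Suc i)"
    and "As n = A"
  shows "P A \<longleftrightarrow> P (As 1) \<and> (\<forall>i\<in>{1..<n}. Q (As (Suc i)) (As i))"
proof -
  have consecutive_pair: "act_with_subact (As (Suc i)) (As i) act" if "1 \<le> i" "i < n" for i
  proof
    show "right_act (As (Suc i)) act"
      using that members by (intro right_act_subact[OF \<open>right_act A act\<close>]) auto
    show "subact (As i) (As (Suc i)) act"
      using that members chain unfolding subact_def by auto
  qed
  have "m \<le> n \<Longrightarrow> P (As m) \<longleftrightarrow> P (As 1) \<and> (\<forall>i\<in>{1..<m}. Q (As (Suc i)) (As i))"
    if "1 \<le> m" for m
    using that
  proof (induction m rule: nat_induct_at_least)
    case (Suc m)
    then have "m < n" by simp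
    have "P (As (Suc m)) \<longleftrightarrow> P (As m) \<and> Q (As (Suc m)) (As m)"
      by (rule step[OF consecutive_pair[OF Suc.hyps \<open>m < n\<close>]])
    also have "\<dots> \<longleftrightarrow> P (As 1) \<and> (\<forall>i\<in>{1..<m}. Q (As (Suc i)) (As i)) \<and> Q (As (Suc m)) (As m)"
      using Suc.IH \<open>m < n\<close> by simp
    also have "\<dots> \<longleftrightarrow> P (As 1) \<and> (\<forall>i\<in>{1..<Suc m}. Q (As (Suc i)) (As i))"
      using Suc.hyps by (auto simp: atLeastLessThanSuc)
    finally show ?case .
  qed simp
  from this[OF \<open>n \<ge> 1\<close> order.refl] show ?thesis
    by (simp only: \<open>As n = A\<close>)
qed

theorem mainTheorem6:
  fixes act :: "'a \<Rightarrow> 's::monoid_mult \<Rightarrow> 'a"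
    and A :: "'a set" and As :: "nat \<Rightarrow> 'a set" and n :: nat
  assumes "right_act A act"
    and "n \<ge> 1"
    and "\<forall>i\<in>{1..n}. subact (As i) A act"
    and "\<forall>i\<in>{1..<n}. As i \<subseteq> As (Suc i)"
    and "As n = A"
  shows "(act_artinian A act \<longleftrightarrow>
            act_artinian (As 1) act \<and>
            (\<forall>i\<in>{1..<n}. act_artinian (rees_factor_carrier (As (Suc i)) (As i))
                                        (rees_factor_act (As (Suc i)) (As i) act)))
       \<and> (act_noetherian A act \<longleftrightarrow>
            act_noetherian (As 1) act \<and>
            (\<forall>i\<in>{1..<n}. act_noetherian (rees_factor_carrier (As (Suc i)) (As i))
                                        (rees_factor_act (As (Suc i)) (As i) act)))
       \<and> (act_rees_artinian A act \<longleftrightarrow>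
            act_rees_artinian (As 1) act \<and>
            (\<forall>i\<in>{1..<n}. act_rees_artinian (rees_factor_carrier (As (Suc i)) (As i))
                                        (rees_factor_act (As (Suc i)) (As i) act)))
       \<and> (act_rees_noetherian A act \<longleftrightarrow>
            act_rees_noetherian (As 1) act \<and>
            (\<forall>i\<in>{1..<n}. act_rees_noetherian (rees_factor_carrier (As (Suc i)) (As i))
                                        (rees_factor_act (As (Suc i)) (As i) act)))"
  using iff_along_subact_series[OF act_with_subact.artinian_iff assms]
    iff_along_subact_series[OF act_with_subact.noetherian_iff assms]
    iff_along_subact_series[OF act_with_subact.rees_artinian_iff assms]
    iff_along_subact_series[OF act_with_subact.rees_noetherian_iff assms]
  by (intro conjI)

end
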